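(* Let $M=(A,B;C,D)$ be real with $AD-BC=1$, $B\neq0$, let $\psi\in L^{2}(\mathbb{R}^{2})$ be a polar mother wavelet, $f\in L^{2}(\mathbb{R}^{2})$, $\boldsymbol{c}\in\mathbb{R}^2$, and $h(\boldsymbol{t})=f(\boldsymbol{t}-\boldsymbol{c})e^{-j\frac{A}{B}\boldsymbol{t}\cdot\boldsymbol{c}}$. Then for all $\boldsymbol{b}\in\mathbb{R}^2$, $a>0$, $\theta\in[0,2\pi]$, $$W^{M}_{h}(\boldsymbol{b},a,\theta)=e^{-j\frac{A}{B}\boldsymbol{b}\cdot\boldsymbol{c}}\,W^{M}_{f}(\boldsymbol{b}-\boldsymbol{c},a,\theta).$$
   Context: $j$ is the imaginary unit. $R_\theta(t_1,t_2)=(t_1\cos\theta+t_2\sin\theta,\,-t_1\sin\theta+t_2\cos\theta)$. The PLCWT of $f\in L^2(\mathbb{R}^2)$ with respect to $\psi$ is $W^{M}_{f}(\boldsymbol{b},a,\theta)=\frac1a\int_{\mathbb{R}^{2}}f(\boldsymbol{t})\overline{\psi\!\left(\frac{R_{-\theta}(\boldsymbol{t}-\boldsymbol{b})}{a}\right)}e^{j\frac{A}{2B}(|\boldsymbol{t}|^{2}-|\boldsymbol{b}|^{2})}{\rm d}\boldsymbol{t}$ for $a>0$, $\boldsymbol{b}\in\mathbb{R}^2$, $\theta\in[0,2\pi]$. *)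

theory Defs
  imports "HOL-Analysis.Analysis"
begin

text \<open>Points of R^2 are modelled as pairs of reals; lborel on real \<times> real is
  the 2-dimensional Lebesgue measure.\<close>

definition rot :: "real \<Rightarrow> real \<times> real \<Rightarrow> real \<times> real" where
  "rot \<theta> t = (fst t * cos \<theta> + snd t * sin \<theta>, - fst t * sin \<theta> + snd t * cos \<theta>)"

definition L2 :: "(real \<times> real \<Rightarrow> complex) \<Rightarrow> bool" where
  "L2 f \<longleftrightarrow> f \<in> borel_measurable lborel \<and> integrable lborel (\<lambda>t. (norm (f t))\<^sup>2)"

text \<open>Plancherel (L^2) Fourier transform: psi_hat is the L^2 limit of the Fourier
  integrals truncated to balls of radius n.\<close>
definition is_L2_fourier :: "(real \<times> real \<Rightarrow> complex) \<Rightarrow> (real \<times> real \<Rightarrow> complex) \<Rightarrow> bool" where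
  "is_L2_fourier psi psihat \<longleftrightarrow> L2 psihat \<and>
     ((\<lambda>n::nat. LINT w|lborel. (norm (psihat w -
         (LINT t|lborel. indicator (ball 0 (real n)) t *\<^sub>R (psi t * exp (- \<i> * complex_of_real (w \<bullet> t))))))\<^sup>2)
      \<longlonglongrightarrow> 0)"

text \<open>Polar mother wavelet: square integrable and admissible,
  C_psi = (2 pi)^2 \<integral> |psi_hat(w)|^2 / |w|^2 dw < \<infinity>.\<close>
definition polar_mother_wavelet :: "(real \<times> real \<Rightarrow> complex) \<Rightarrow> bool" where
  "polar_mother_wavelet psi \<longleftrightarrow> L2 psi \<and>
     (\<exists>psihat. is_L2_fourier psi psihat \<and>
        (\<integral>\<^sup>+ w. ennreal ((norm (psihat w))\<^sup>2 / (norm w)\<^sup>2) \<partial>lborel) < \<infinity>)"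

text \<open>Polar linear canonical wavelet transform W^M_f(b,a,theta) (depends on A, B of M).\<close>
definition PLCWT :: "real \<Rightarrow> real \<Rightarrow> (real \<times> real \<Rightarrow> complex) \<Rightarrow> (real \<times> real \<Rightarrow> complex)
    \<Rightarrow> real \<times> real \<Rightarrow> real \<Rightarrow> real \<Rightarrow> complex" where
  "PLCWT A B psi f b a \<theta> = complex_of_real (1 / a) *
     (LINT t|lborel. f t * cnj (psi ((1 / a) *\<^sub>R rot (- \<theta>) (t - b)))
        * exp (\<i> * complex_of_real (A / (2 * B) * ((norm t)\<^sup>2 - (norm b)\<^sup>2))))"

end

theory Submission
  imports Defs
begin

text \<open>Substituting \<open>t = c + s\<close> in the transform of \<open>h\<close>, the modulation factor of \<open>h\<close> and the
  chirp of the kernel combine into the chirp centred at \<open>b - c\<close> times a constant phase, because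
  \<open>|c + s|\<^sup>2 - 2 (c + s) \<bullet> c - |b|\<^sup>2 = |s|\<^sup>2 - |b - c|\<^sup>2 - 2 b \<bullet> c\<close>.
  Lebesgue measure is translation invariant and translation preserves non-integrability (where
  the Bochner integral is \<open>0\<close>), so none of the hypotheses on \<open>M\<close>, \<open>\<psi>\<close> or \<open>f\<close> is needed.\<close>

lemma lborel_integrable_translate:
  fixes g :: "'a::euclidean_space \<Rightarrow> 'b::{banach, second_countable_topology}"
  assumes "integrable lborel g"
  shows "integrable lborel (\<lambda>x. g (c + x))"
  using assms by (intro integrable_distr[of "(+) c" lborel borel]) (simp_all add: lborel_distr_plus)

lemma lborel_integrable_translate_iff:
  fixes g :: "'a::euclidean_space \<Rightarrow> 'b::{banach, second_countable_topology}"
  shows "integrable lborel (\<lambda>x. g (c + x)) \<longleftrightarrow> integrable lborel g"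
  using lborel_integrable_translate[of g c] lborel_integrable_translate[of "\<lambda>x. g (c + x)" "- c"]
  by auto

lemma lborel_integral_translate:
  fixes g :: "'a::euclidean_space \<Rightarrow> 'b::{banach, second_countable_topology}"
  shows "(\<integral>x. g x \<partial>lborel) = (\<integral>x. g (c + x) \<partial>lborel)"
proof (cases "integrable lborel g")
  case True
  then have "(\<integral>x. g x \<partial>lborel) = (\<integral>x. g x \<partial>distr lborel borel ((+) c))"
    by (simp add: lborel_distr_plus)
  also have "\<dots> = (\<integral>x. g (c + x) \<partial>lborel)"
    using True by (intro integral_distr) auto
  finally show ?thesis .
next
  case False
  then show ?thesis
    by (simp add: lborel_integrable_translate_iff not_integrable_integral_eq)
qed

lemma chirp_phase_translate:
  fixes b c s :: "'a::real_inner" and A B :: real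
  shows "A / (2 * B) * ((norm (c + s))\<^sup>2 - (norm b)\<^sup>2) - A / B * ((c + s) \<bullet> c)
    = A / (2 * B) * ((norm s)\<^sup>2 - (norm (b - c))\<^sup>2) - A / B * (b \<bullet> c)"
  by (cases "B = 0") (simp_all add: power2_norm_eq_inner inner_add_left inner_add_right
      inner_diff_left inner_diff_right inner_commute field_simps)

lemma chirp_modulation_translate:
  fixes b c s :: "'a::real_inner" and A B :: real
  shows "exp (- \<i> * complex_of_real (A / B * ((c + s) \<bullet> c)))
      * exp (\<i> * complex_of_real (A / (2 * B) * ((norm (c + s))\<^sup>2 - (norm b)\<^sup>2)))
    = exp (- \<i> * complex_of_real (A / B * (b \<bullet> c)))
      * exp (\<i> * complex_of_real (A / (2 * B) * ((norm s)\<^sup>2 - (norm (b - c))\<^sup>2)))"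
proof -
  have exp_phase_diff: "exp (- \<i> * complex_of_real x) * exp (\<i> * complex_of_real y)
      = exp (\<i> * complex_of_real (y - x))" for x y
    by (simp add: algebra_simps flip: exp_add)
  show ?thesis
    unfolding exp_phase_diff chirp_phase_translate ..
qed

theorem mainTheorem7:
  fixes A B C D :: real and psi f :: "real \<times> real \<Rightarrow> complex" and c :: "real \<times> real"
  assumes "A * D - B * C = 1" and "B \<noteq> 0"
    and "polar_mother_wavelet psi" and "L2 f"
  shows "\<forall>b a \<theta>. a > 0 \<longrightarrow> \<theta> \<in> {0..2 * pi} \<longrightarrow>
     PLCWT A B psi (\<lambda>t. f (t - c) * exp (- \<i> * complex_of_real (A / B * (t \<bullet> c)))) b a \<theta>
     = exp (- \<i> * complex_of_real (A / B * (b \<bullet> c))) * PLCWT A B psi f (b - c) a \<theta>"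
proof (intro allI impI)
  fix b :: "real \<times> real" and a \<theta> :: real
  let ?kernel = "\<lambda>b t. cnj (psi ((1 / a) *\<^sub>R rot (- \<theta>) (t - b)))"
  let ?chirp = "\<lambda>b t. exp (\<i> * complex_of_real (A / (2 * B) * ((norm t)\<^sup>2 - (norm b)\<^sup>2)))"
  let ?phase = "\<lambda>t. exp (- \<i> * complex_of_real (A / B * (t \<bullet> c)))"
  have integrand: "f (c + s - c) * ?phase (c + s) * ?kernel b (c + s) * ?chirp b (c + s)
      = ?phase b * (f s * ?kernel (b - c) s * ?chirp (b - c) s)" for s
  proof -
    have "c + s - b = s - (b - c)" "c + s - c = s"
      by (simp_all add: algebra_simps)
    then have "f (c + s - c) * ?phase (c + s) * ?kernel b (c + s) * ?chirp b (c + s)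
        = f s * ?kernel (b - c) s * (?phase (c + s) * ?chirp b (c + s))"
      by (simp only: mult_ac)
    also have "\<dots> = f s * ?kernel (b - c) s * (?phase b * ?chirp (b - c) s)"
      by (simp only: chirp_modulation_translate)
    finally show ?thesis
      by (simp only: mult_ac)
  qed
  show "PLCWT A B psi (\<lambda>t. f (t - c) * ?phase t) b a \<theta> = ?phase b * PLCWT A B psi f (b - c) a \<theta>"
    unfolding PLCWT_def
    by (subst lborel_integral_translate[of _ c]) (simp only: integrand integral_mult_right_zero, simp only: mult_ac)
qed

end
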